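(* Let $n\ge1$. For $i\ge1$ let $E'_i\in\mathbb{Q}[\mathfrak{S}_n]$ be the sum of all permutations with exactly $i-1$ interior peaks, and $\overline{E}'_i$ the sum of all permutations with exactly $i$ exterior peaks. Then the linear span $\mathfrak{p}_n$ of $E'_1,\dots,E'_{\lfloor (n+1)/2\rfloor}$ and the linear span $\overline{\mathfrak{p}}_n$ of $\overline{E}'_1,\dots,\overline{E}'_{\lfloor (n+1)/2\rfloor}$ are each commutative subalgebras of $\mathbb{Q}[\mathfrak{S}_n]$ of dimension $\lfloor (n+1)/2\rfloor$.
   Context: $\mathfrak{S}_n$ is the symmetric group on $[n]=\{1,\dots,n\}$, with multiplication in $\mathbb{Q}[\mathfrak{S}_n]$ given by composition. For $\pi\in\mathfrak{S}_n$ set $\pi(0)=\pi(n+1)=0$; a position $i\in[n]$ is a peak of $\pi$ if $\pi(i-1)<\pi(i)>\pi(i+1)$. An interior peak is a peak $i$ with $1<i<n$; an exterior peak is any peak $i$ with $1\le i\le n$. *)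

theory Defs
  imports Complex_Main "HOL-Combinatorics.Permutations" "HOL-Library.Function_Algebras"
begin

text \<open>Permutations of [n] are functions nat => nat permuting {1..n} (fixing everything else).
  Elements of Q[S_n] are functions (nat => nat) => rat vanishing outside the permutations of [n].\<close>

definition perms :: "nat \<Rightarrow> (nat \<Rightarrow> nat) set" where
  "perms n = {p. p permutes {1..n}}"

text \<open>Value of pi at position i with the convention pi(0) = pi(n+1) = 0.\<close>
definition pval :: "nat \<Rightarrow> (nat \<Rightarrow> nat) \<Rightarrow> nat \<Rightarrow> nat" where
  "pval n p i = (if 1 \<le> i \<and> i \<le> n then p i else 0)"

definition is_peak :: "nat \<Rightarrow> (nat \<Rightarrow> nat) \<Rightarrow> nat \<Rightarrow> bool" where
  "is_peak n p i \<longleftrightarrow> 1 \<le> i \<and> i \<le> n \<and>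
     pval n p (i - 1) < pval n p i \<and> pval n p i > pval n p (i + 1)"

definition interior_peaks :: "nat \<Rightarrow> (nat \<Rightarrow> nat) \<Rightarrow> nat" where
  "interior_peaks n p = card {i. is_peak n p i \<and> 1 < i \<and> i < n}"

definition exterior_peaks :: "nat \<Rightarrow> (nat \<Rightarrow> nat) \<Rightarrow> nat" where
  "exterior_peaks n p = card {i. is_peak n p i}"

definition E' :: "nat \<Rightarrow> nat \<Rightarrow> ((nat \<Rightarrow> nat) \<Rightarrow> rat)" where
  "E' n i = (\<lambda>p. if p \<in> perms n \<and> interior_peaks n p = i - 1 then 1 else 0)"

definition Ebar' :: "nat \<Rightarrow> nat \<Rightarrow> ((nat \<Rightarrow> nat) \<Rightarrow> rat)" where
  "Ebar' n i = (\<lambda>p. if p \<in> perms n \<and> exterior_peaks n p = i then 1 else 0)"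

text \<open>Product in Q[S_n], multiplication of permutations being composition:
  (a b)(pi) = sum over sigma o tau = pi of a(sigma) b(tau).\<close>
definition gmult :: "nat \<Rightarrow> ((nat \<Rightarrow> nat) \<Rightarrow> rat) \<Rightarrow> ((nat \<Rightarrow> nat) \<Rightarrow> rat) \<Rightarrow> ((nat \<Rightarrow> nat) \<Rightarrow> rat)" where
  "gmult n a b = (\<lambda>\<pi>. if \<pi> \<in> perms n then (\<Sum>\<sigma>\<in>perms n. a \<sigma> * b (inv \<sigma> \<circ> \<pi>)) else 0)"

definition qscale :: "rat \<Rightarrow> ((nat \<Rightarrow> nat) \<Rightarrow> rat) \<Rightarrow> ((nat \<Rightarrow> nat) \<Rightarrow> rat)" where
  "qscale c f = (\<lambda>x. c * f x)"

abbreviation qspan :: "((nat \<Rightarrow> nat) \<Rightarrow> rat) set \<Rightarrow> ((nat \<Rightarrow> nat) \<Rightarrow> rat) set" where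
  "qspan S \<equiv> module.span qscale S"

abbreviation qdim :: "((nat \<Rightarrow> nat) \<Rightarrow> rat) set \<Rightarrow> nat" where
  "qdim S \<equiv> vector_space.dim qscale S"

definition peak_alg :: "nat \<Rightarrow> ((nat \<Rightarrow> nat) \<Rightarrow> rat) set" where
  "peak_alg n = qspan (E' n ` {1..(n + 1) div 2})"

definition peak_alg_ext :: "nat \<Rightarrow> ((nat \<Rightarrow> nat) \<Rightarrow> rat) set" where
  "peak_alg_ext n = qspan (Ebar' n ` {1..(n + 1) div 2})"

text \<open>A (not necessarily unital) commutative subalgebra: a linear subspace closed under
  the product, on which the product is commutative.\<close>
definition comm_subalg :: "nat \<Rightarrow> ((nat \<Rightarrow> nat) \<Rightarrow> rat) set \<Rightarrow> bool" where
  "comm_subalg n A \<longleftrightarrow> module.subspace qscale A \<and>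
     (\<forall>a\<in>A. \<forall>p. p \<notin> perms n \<longrightarrow> a p = 0) \<and>
     (\<forall>a\<in>A. \<forall>b\<in>A. gmult n a b \<in> A \<and> gmult n a b = gmult n b a)"

end

theory Submission
  imports Defs "HOL-Computational_Algebra.Polynomial" "HOL-Library.Product_Lexorder"
begin

text \<open>
  For a signed alphabet \<open>L\<close> (a totally ordered alphabet whose letters are positive or
  negative) let \<open>\<Psi>(L) \<in> \<rat>[S\<^sub>n]\<close> be the sum of \<open>std(w)\<^sup>-\<^sup>1\<close> over all words \<open>w\<close> of
  length \<open>n\<close> over \<open>L\<close>, where standardization numbers equal positive letters from left to
  right and equal negative letters from right to left. Merging a pair of words \<open>(v, x)\<close> into
  a single word over the product alphabet \<open>L \<otimes> M\<close> gives \<open>\<Psi>(M) \<Psi>(L) = \<Psi>(L \<otimes> M)\<close>.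

  For the alternating alphabet \<open>A\<^sub>k = -+-+\<dots>\<close> with \<open>2k\<close> letters, \<open>A\<^sub>l \<otimes> A\<^sub>k = A\<^sub>2\<^sub>k\<^sub>l\<close>, and
  counting the words with a given standardization shows that the coefficient of \<open>\<pi>\<close> in
  \<open>\<Psi>(A\<^sub>k)\<close> is a number \<open>G(k, p)\<close> depending only on the number \<open>p\<close> of interior peaks of \<open>\<pi>\<close>,
  with \<open>G(k, p) = 0\<close> for \<open>p \<ge> k\<close> and \<open>G(p + 1, p) > 0\<close>. So \<open>\<Psi>(A\<^sub>1), \<dots>, \<Psi>(A\<^sub>m)\<close> arise
  from \<open>E'\<^sub>1, \<dots>, E'\<^sub>m\<close> by a triangular change of basis, and their span is a commutative
  algebra because \<open>\<Psi>(A\<^sub>k) \<Psi>(A\<^sub>l) = \<Psi>(A\<^sub>2\<^sub>k\<^sub>l)\<close>. The alphabets \<open>+-+-\<dots>\<close> give the exterior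
  peaks in the same way, since reversing all signs complements the descent set.
\<close>

section \<open>Spans of level sums in the group algebra\<close>

interpretation qv: vector_space qscale
  by unfold_locales (auto simp: qscale_def algebra_simps fun_eq_iff)

lemma perms_permutes: "\<pi> \<in> perms n \<Longrightarrow> \<pi> permutes {1..n}"
  by (simp add: perms_def)

lemma perms_finite: "finite (perms n)"
  by (simp add: perms_def finite_permutations)

lemma perms_in: "\<pi> \<in> perms n \<Longrightarrow> t \<in> {1..n} \<Longrightarrow> \<pi> t \<in> {1..n}"
  unfolding perms_def using permutes_in_image by fastforce

lemma perms_inj: "\<pi> \<in> perms n \<Longrightarrow> \<pi> s = \<pi> t \<Longrightarrow> s = t"
  unfolding perms_def by (metis mem_Collect_eq permutes_inj injD)

lemma sum_fun_apply: "(\<Sum>i\<in>I. f i) x = (\<Sum>i\<in>I. f i x)"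
  by (induction I rule: infinite_finite_induct) auto

lemma qscale_apply: "qscale c f x = c * f x"
  by (simp add: qscale_def)

lemma gmult_add_left: "gmult n (a + b) c = gmult n a c + gmult n b c"
  by (auto simp: gmult_def fun_eq_iff algebra_simps sum.distrib)

lemma gmult_add_right: "gmult n c (a + b) = gmult n c a + gmult n c b"
  by (auto simp: gmult_def fun_eq_iff algebra_simps sum.distrib)

lemma gmult_scale_left: "gmult n (qscale r a) c = qscale r (gmult n a c)"
  by (auto simp: gmult_def fun_eq_iff algebra_simps sum_distrib_left qscale_apply)

lemma gmult_scale_right: "gmult n c (qscale r a) = qscale r (gmult n c a)"
  by (auto simp: gmult_def fun_eq_iff algebra_simps sum_distrib_left qscale_apply)

lemma gmult_zero_left: "gmult n 0 c = 0"
  by (auto simp: gmult_def fun_eq_iff)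

lemma gmult_zero_right: "gmult n c 0 = 0"
  by (auto simp: gmult_def fun_eq_iff)

lemmas gmult_bilinear =
  gmult_add_left gmult_add_right gmult_scale_left gmult_scale_right gmult_zero_left gmult_zero_right

lemma gmult_span_closed:
  assumes A: "qv.subspace A" and S: "\<And>x y. x \<in> S \<Longrightarrow> y \<in> S \<Longrightarrow> gmult n x y \<in> A"
    and "a \<in> qv.span S" and "b \<in> qv.span S"
  shows "gmult n a b \<in> A"
proof -
  have left: "gmult n x b \<in> A" if "x \<in> S" for x
    using \<open>b \<in> qv.span S\<close>
    by (induction rule: qv.span_induct) (use A S that in \<open>auto simp: qv.subspace_def gmult_bilinear\<close>)
  show ?thesis
    using \<open>a \<in> qv.span S\<close>
    by (induction rule: qv.span_induct) (use A left in \<open>auto simp: qv.subspace_def gmult_bilinear\<close>)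
qed

lemma gmult_span_commute:
  assumes S: "\<And>x y. x \<in> S \<Longrightarrow> y \<in> S \<Longrightarrow> gmult n x y = gmult n y x"
    and "a \<in> qv.span S" and "b \<in> qv.span S"
  shows "gmult n a b = gmult n b a"
proof -
  have left: "gmult n x b = gmult n b x" if "x \<in> S" for x
    using \<open>b \<in> qv.span S\<close>
    by (induction rule: qv.span_induct) (use S that in \<open>auto simp: qv.subspace_def gmult_bilinear\<close>)
  show ?thesis
    using \<open>a \<in> qv.span S\<close>
    by (induction rule: qv.span_induct) (use left in \<open>auto simp: qv.subspace_def gmult_bilinear\<close>)
qed

lemma comm_subalg_span:
  assumes "\<And>a p. a \<in> S \<Longrightarrow> p \<notin> perms n \<Longrightarrow> a p = 0"
    and "\<And>a b. a \<in> S \<Longrightarrow> b \<in> S \<Longrightarrow> gmult n a b \<in> qspan S"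
    and "\<And>a b. a \<in> S \<Longrightarrow> b \<in> S \<Longrightarrow> gmult n a b = gmult n b a"
  shows "comm_subalg n (qspan S)"
proof -
  have "a p = 0" if "a \<in> qspan S" "p \<notin> perms n" for a p
    using \<open>a \<in> qspan S\<close>
    by (induction rule: qv.span_induct) (use assms(1) that(2) in \<open>auto simp: qv.subspace_def qscale_apply\<close>)
  then show ?thesis
    unfolding comm_subalg_def
    using gmult_span_closed[OF qv.subspace_span assms(2)] gmult_span_commute[OF assms(3)] by auto
qed

definition perm_sum :: "nat \<Rightarrow> ((nat \<Rightarrow> nat) \<Rightarrow> nat) \<Rightarrow> (nat \<Rightarrow> nat) \<Rightarrow> rat" where
  "perm_sum n f = (\<lambda>\<pi>. if \<pi> \<in> perms n then of_nat (f \<pi>) else 0)"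

definition level_sum :: "nat \<Rightarrow> ((nat \<Rightarrow> nat) \<Rightarrow> nat) \<Rightarrow> nat \<Rightarrow> (nat \<Rightarrow> nat) \<Rightarrow> rat" where
  "level_sum n \<kappa> i = (\<lambda>\<pi>. if \<pi> \<in> perms n \<and> \<kappa> \<pi> = i then 1 else 0)"

lemma perm_sum_eq_sum_level_sums:
  assumes "finite I" and "\<And>\<pi>. \<pi> \<in> perms n \<Longrightarrow> \<kappa> \<pi> \<in> I"
  shows "perm_sum n (\<lambda>\<pi>. g (\<kappa> \<pi>)) = (\<Sum>i\<in>I. qscale (of_nat (g i)) (level_sum n \<kappa> i))"
proof
  fix \<pi>
  have "(\<Sum>i\<in>I. qscale (of_nat (g i)) (level_sum n \<kappa> i)) \<pi>
      = (\<Sum>i\<in>I. if \<pi> \<in> perms n \<and> i = \<kappa> \<pi> then of_nat (g i) else 0)"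
    unfolding sum_fun_apply by (intro sum.cong) (auto simp: level_sum_def qscale_apply)
  then show "perm_sum n (\<lambda>\<pi>. g (\<kappa> \<pi>)) \<pi> = (\<Sum>i\<in>I. qscale (of_nat (g i)) (level_sum n \<kappa> i)) \<pi>"
    using assms by (simp add: perm_sum_def sum.delta' if_distrib cong: if_cong)
qed

lemma perm_sum_in_span_level_sums:
  assumes "finite I" and "\<And>\<pi>. \<pi> \<in> perms n \<Longrightarrow> \<kappa> \<pi> \<in> I"
  shows "perm_sum n (\<lambda>\<pi>. g (\<kappa> \<pi>)) \<in> qspan (level_sum n \<kappa> ` I)"
  using perm_sum_eq_sum_level_sums[of I n \<kappa> g, OF assms] \<open>finite I\<close>
  by (simp add: qv.span_sum qv.span_scale qv.span_base)

lemma span_perm_sums_eq_span_level_sums: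
  fixes G :: "nat \<Rightarrow> nat \<Rightarrow> nat"
  assumes range: "\<And>\<pi>. \<pi> \<in> perms n \<Longrightarrow> \<kappa> \<pi> \<in> {1..m}"
    and G_zero: "\<And>k j. k \<le> j \<Longrightarrow> G k j = 0"
    and G_pos: "\<And>p. 0 < G (Suc p) p"
  shows "qspan ((\<lambda>k. perm_sum n (\<lambda>\<pi>. G k (\<kappa> \<pi> - 1))) ` {1..m}) = qspan (level_sum n \<kappa> ` {1..m})"
    (is "qspan (?\<Phi> ` _) = qspan (?E ` _)")
proof -
  have \<Phi>_eq: "?\<Phi> k = (\<Sum>j\<in>{1..m}. qscale (of_nat (G k (j - 1))) (?E j))" for k
    using perm_sum_eq_sum_level_sums[of "{1..m}" n \<kappa> "\<lambda>j. G k (j - 1)"] range by simp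
  have \<Phi>_in: "?\<Phi> k \<in> qspan (?E ` {1..m})" for k
    using perm_sum_in_span_level_sums[of "{1..m}" n \<kappa> "\<lambda>j. G k (j - 1)"] range by simp
  have "?E i \<in> qspan (?\<Phi> ` {1..m})" if "i \<in> {1..m}" for i
    using that
  proof (induction i rule: less_induct)
    case (less i)
    let ?lower = "\<Sum>j\<in>{1..<i}. qscale (of_nat (G i (j - 1))) (?E j)"
    have split: "{1..m} = insert i ({1..<i} \<union> {i<..m})"
      using less.prems by auto
    have upper: "(\<Sum>j\<in>{i<..m}. qscale (of_nat (G i (j - 1))) (?E j)) = 0"
      by (intro sum.neutral) (auto simp: G_zero qscale_def fun_eq_iff)
    have "(\<Sum>j\<in>{1..<i} \<union> {i<..m}. qscale (of_nat (G i (j - 1))) (?E j))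
        = ?lower + (\<Sum>j\<in>{i<..m}. qscale (of_nat (G i (j - 1))) (?E j))"
      by (rule sum.union_disjoint) auto
    then have "?\<Phi> i = qscale (of_nat (G i (i - 1))) (?E i) + ?lower"
      unfolding \<Phi>_eq split using upper by simp
    then have E_eq: "?E i = qscale (1 / of_nat (G i (i - 1))) (?\<Phi> i - ?lower)"
      using G_pos[of "i - 1"] less.prems by (auto simp: fun_eq_iff qscale_def)
    have "?lower \<in> qspan (?\<Phi> ` {1..m})"
      using less by (intro qv.span_sum qv.span_scale) auto
    moreover have "?\<Phi> i \<in> qspan (?\<Phi> ` {1..m})"
      using less.prems by (intro qv.span_base) auto
    ultimately show ?case
      unfolding E_eq by (intro qv.span_scale qv.span_diff)
  qed
  then show ?thesis
    unfolding qv.span_eq using \<Phi>_in by auto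
qed

lemma dim_span_level_sums:
  assumes "finite I" and levels_nonempty: "\<And>i. i \<in> I \<Longrightarrow> \<exists>\<pi>\<in>perms n. \<kappa> \<pi> = i"
  shows "qdim (qspan (level_sum n \<kappa> ` I)) = card I"
proof -
  have inj: "inj_on (level_sum n \<kappa>) I"
  proof (rule inj_onI)
    fix i j assume "i \<in> I" "j \<in> I" "level_sum n \<kappa> i = level_sum n \<kappa> j"
    moreover obtain \<pi> where "\<pi> \<in> perms n" "\<kappa> \<pi> = i"
      using levels_nonempty \<open>i \<in> I\<close> by blast
    ultimately show "i = j"
      by (auto simp: level_sum_def fun_eq_iff split: if_splits)
  qed
  have "qv.independent (level_sum n \<kappa> ` I)"
  proof (rule qv.independent_if_scalars_zero)
    fix f x
    assume zero: "(\<Sum>x\<in>level_sum n \<kappa> ` I. qscale (f x) x) = 0" and "x \<in> level_sum n \<kappa> ` I"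
    then obtain i where i: "i \<in> I" "x = level_sum n \<kappa> i" by blast
    obtain \<pi> where \<pi>: "\<pi> \<in> perms n" "\<kappa> \<pi> = i"
      using levels_nonempty i(1) by blast
    have "0 = (\<Sum>j\<in>I. f (level_sum n \<kappa> j) * level_sum n \<kappa> j \<pi>)"
      using fun_cong[OF zero, of \<pi>] by (simp add: sum_fun_apply sum.reindex[OF inj] qscale_apply)
    also have "\<dots> = f x"
      using \<pi> i \<open>finite I\<close> by (simp add: level_sum_def if_distrib sum.delta cong: if_cong)
    finally show "f x = 0" by simp
  qed (use \<open>finite I\<close> in simp)
  then show ?thesis
    using card_image[OF inj] by (simp add: qv.dim_eq_card_independent)
qed

lemma comm_subalg_span_level_sums:
  fixes G \<mu> :: "nat \<Rightarrow> nat \<Rightarrow> nat" and \<Phi> :: "nat \<Rightarrow> (nat \<Rightarrow> nat) \<Rightarrow> rat"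
  assumes range: "\<And>\<pi>. \<pi> \<in> perms n \<Longrightarrow> \<kappa> \<pi> \<in> {1..m}"
    and levels_nonempty: "\<And>i. i \<in> {1..m} \<Longrightarrow> \<exists>\<pi>\<in>perms n. \<kappa> \<pi> = i"
    and \<Phi>_eq: "\<And>k. \<Phi> k = perm_sum n (\<lambda>\<pi>. G k (\<kappa> \<pi> - 1))"
    and G_zero: "\<And>k j. k \<le> j \<Longrightarrow> G k j = 0"
    and G_pos: "\<And>p. 0 < G (Suc p) p"
    and mult: "\<And>k l. 1 \<le> k \<Longrightarrow> 1 \<le> l \<Longrightarrow> gmult n (\<Phi> k) (\<Phi> l) = \<Phi> (\<mu> k l)"
    and \<mu>_commute: "\<And>k l. \<mu> k l = \<mu> l k"
  shows "comm_subalg n (qspan (level_sum n \<kappa> ` {1..m})) \<and> qdim (qspan (level_sum n \<kappa> ` {1..m})) = m"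
proof
  have span_eq: "qspan (\<Phi> ` {1..m}) = qspan (level_sum n \<kappa> ` {1..m})"
    using span_perm_sums_eq_span_level_sums[of n \<kappa> m G, OF range G_zero G_pos] by (simp add: \<Phi>_eq)
  have "\<Phi> j \<in> qspan (\<Phi> ` {1..m})" for j
    unfolding span_eq \<Phi>_eq
    using perm_sum_in_span_level_sums[of "{1..m}" n \<kappa> "\<lambda>i. G j (i - 1)"] range by simp
  then have "comm_subalg n (qspan (\<Phi> ` {1..m}))"
  proof (intro comm_subalg_span)
    show "a p = 0" if "a \<in> \<Phi> ` {1..m}" "p \<notin> perms n" for a p
      using that by (auto simp: \<Phi>_eq perm_sum_def)
    show "gmult n a b \<in> qspan (\<Phi> ` {1..m})" if "a \<in> \<Phi> ` {1..m}" "b \<in> \<Phi> ` {1..m}" for a b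
      using that mult \<open>\<And>j. \<Phi> j \<in> qspan (\<Phi> ` {1..m})\<close> by auto
    show "gmult n a b = gmult n b a" if "a \<in> \<Phi> ` {1..m}" "b \<in> \<Phi> ` {1..m}" for a b
      using that mult \<mu>_commute by auto
  qed
  then show "comm_subalg n (qspan (level_sum n \<kappa> ` {1..m}))"
    by (simp only: span_eq)
  show "qdim (qspan (level_sum n \<kappa> ` {1..m})) = m"
    using dim_span_level_sums[of "{1..m}" n \<kappa>] levels_nonempty by simp
qed

section \<open>Peaks and descent words\<close>

fun peak_count :: "bool list \<Rightarrow> nat" where
  "peak_count (False # True # r) = Suc (peak_count r)"
| "peak_count (x # r) = peak_count r"
| "peak_count [] = 0"

lemma peak_count_Cons_Cons:
  "peak_count (x # y # r) = (if \<not> x \<and> y then 1 else 0) + peak_count (y # r)"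
  by (cases x; cases y) auto

lemma peak_count_card:
  "peak_count xs = card {j. Suc j < length xs \<and> \<not> xs ! j \<and> xs ! Suc j}"
proof (induction xs rule: induct_list012)
  case (3 x y r)
  let ?P = "\<lambda>xs j. Suc j < length xs \<and> \<not> xs ! j \<and> xs ! Suc j"
  have "{j. ?P (x # y # r) j} = (if \<not> x \<and> y then {0} else {}) \<union> Suc ` {j. ?P (y # r) j}"
  proof (rule set_eqI)
    fix j show "j \<in> {j. ?P (x # y # r) j} \<longleftrightarrow> j \<in> (if \<not> x \<and> y then {0} else {}) \<union> Suc ` {j. ?P (y # r) j}"
      by (cases j) auto
  qed
  then show ?case
    using 3 by (simp add: peak_count_Cons_Cons card_image)
qed auto

lemma peak_count_le: "2 * peak_count xs \<le> length xs"
  by (induction xs rule: peak_count.induct) auto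

lemma peak_count_snoc_False: "peak_count (xs @ [False]) = peak_count xs"
  by (induction xs rule: induct_list012) (auto simp: peak_count_Cons_Cons)

lemma peak_count_map_Not:
  "xs \<noteq> [] \<Longrightarrow> peak_count xs + (if hd xs \<and> \<not> last xs then 1 else 0)
     = peak_count (map Not xs) + (if \<not> hd xs \<and> last xs then 1 else 0)"
  by (induction xs rule: induct_list012) (auto simp: peak_count_Cons_Cons)

lemma peak_count_border: "peak_count (False # xs @ [True]) = Suc (peak_count (map Not xs))"
  using peak_count_map_Not[of "False # xs @ [True]"] by (simp add: peak_count_snoc_False)

lemma pval_neq_neighbours:
  assumes "\<pi> \<in> perms n" and "1 \<le> i" and "i \<le> n"
  shows "pval n \<pi> (i - 1) \<noteq> pval n \<pi> i" and "pval n \<pi> i \<noteq> pval n \<pi> (Suc i)"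
  using assms perms_in[OF assms(1), of i] perms_in[OF assms(1), of "i - 1"]
    perms_inj[OF assms(1), of i "i - 1"] perms_inj[OF assms(1), of i "Suc i"]
  by (auto simp: pval_def)

definition descent_word :: "nat \<Rightarrow> (nat \<Rightarrow> nat) \<Rightarrow> bool list" where
  "descent_word n \<pi> = map (\<lambda>t. \<pi> (Suc t) < \<pi> t) [1..<n]"

definition ext_descent_word :: "nat \<Rightarrow> (nat \<Rightarrow> nat) \<Rightarrow> bool list" where
  "ext_descent_word n \<pi> = map (\<lambda>t. pval n \<pi> (Suc t) < pval n \<pi> t) [0..<Suc n]"

lemma length_descent_word [simp]: "length (descent_word n \<pi>) = n - 1"
  by (simp add: descent_word_def)

lemma descent_word_nth: "j < n - 1 \<Longrightarrow> descent_word n \<pi> ! j = (\<pi> (j + 2) < \<pi> (j + 1))"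
  by (simp add: descent_word_def nth_append del: upt_Suc)

lemma length_ext_descent_word [simp]: "length (ext_descent_word n \<pi>) = Suc n"
  by (simp add: ext_descent_word_def)

lemma ext_descent_word_nth:
  "t \<le> n \<Longrightarrow> ext_descent_word n \<pi> ! t = (pval n \<pi> (Suc t) < pval n \<pi> t)"
  by (simp add: ext_descent_word_def nth_append del: upt_Suc)

lemma is_peak_iff_pval:
  assumes "\<pi> \<in> perms n"
  shows "is_peak n \<pi> i \<longleftrightarrow> 1 \<le> i \<and> i \<le> n \<and> \<not> pval n \<pi> i < pval n \<pi> (i - 1) \<and> pval n \<pi> (Suc i) < pval n \<pi> i"
  using pval_neq_neighbours[OF assms, of i] by (auto simp: is_peak_def)

lemma interior_peaks_eq_peak_count:
  assumes "\<pi> \<in> perms n"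
  shows "interior_peaks n \<pi> = peak_count (descent_word n \<pi>)"
proof -
  let ?d = "descent_word n \<pi>"
  have "{i. is_peak n \<pi> i \<and> 1 < i \<and> i < n}
      = (\<lambda>j. j + 2) ` {j. Suc j < length ?d \<and> \<not> ?d ! j \<and> ?d ! Suc j}"
  proof (rule set_eqI)
    fix i
    show "i \<in> {i. is_peak n \<pi> i \<and> 1 < i \<and> i < n}
      \<longleftrightarrow> i \<in> (\<lambda>j. j + 2) ` {j. Suc j < length ?d \<and> \<not> ?d ! j \<and> ?d ! Suc j}"
      using is_peak_iff_pval[OF assms, of i]
        descent_word_nth[of "i - 2" n \<pi>] descent_word_nth[of "i - 1" n \<pi>]
      by (auto simp: image_iff pval_def numeral_2_eq_2 Suc_diff_Suc intro!: exI[of _ "i - 2"])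
  qed
  then show ?thesis
    by (simp add: interior_peaks_def peak_count_card card_image inj_on_def)
qed

lemma exterior_peaks_eq_peak_count_ext:
  assumes "\<pi> \<in> perms n"
  shows "exterior_peaks n \<pi> = peak_count (ext_descent_word n \<pi>)"
proof -
  let ?d = "ext_descent_word n \<pi>"
  have "{i. is_peak n \<pi> i} = Suc ` {j. Suc j < length ?d \<and> \<not> ?d ! j \<and> ?d ! Suc j}"
  proof (rule set_eqI)
    fix i
    show "i \<in> {i. is_peak n \<pi> i} \<longleftrightarrow> i \<in> Suc ` {j. Suc j < length ?d \<and> \<not> ?d ! j \<and> ?d ! Suc j}"
      using is_peak_iff_pval[OF assms, of i]
        ext_descent_word_nth[of "i - 1" n \<pi>] ext_descent_word_nth[of i n \<pi>]
      by (auto simp: image_iff intro!: exI[of _ "i - 1"])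
  qed
  then show ?thesis
    by (simp add: exterior_peaks_def peak_count_card card_image)
qed

lemma ext_descent_word_eq:
  assumes "\<pi> \<in> perms n" and "1 \<le> n"
  shows "ext_descent_word n \<pi> = False # descent_word n \<pi> @ [True]"
proof (rule nth_equalityI)
  fix t assume "t < length (ext_descent_word n \<pi>)"
  then consider "t = 0" | "0 < t" "t < n" | "t = n"
    by fastforce
  then show "ext_descent_word n \<pi> ! t = (False # descent_word n \<pi> @ [True]) ! t"
  proof cases
    case 2
    then show ?thesis
      using descent_word_nth[of "t - 1" n \<pi>] by (auto simp: ext_descent_word_nth nth_append pval_def)
  qed (use assms perms_in[OF assms(1), of 1] perms_in[OF assms(1), of n] in
    \<open>auto simp: ext_descent_word_nth nth_append pval_def\<close>)
qed (use assms in simp)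

lemma exterior_peaks_eq_peak_count:
  assumes "\<pi> \<in> perms n" and "1 \<le> n"
  shows "exterior_peaks n \<pi> = Suc (peak_count (map Not (descent_word n \<pi>)))"
  using assms by (simp add: exterior_peaks_eq_peak_count_ext ext_descent_word_eq peak_count_border)

lemma interior_peaks_le: "\<pi> \<in> perms n \<Longrightarrow> 2 * interior_peaks n \<pi> \<le> n - 1"
  using peak_count_le[of "descent_word n \<pi>"] by (simp add: interior_peaks_eq_peak_count)

lemma exterior_peaks_le: "\<pi> \<in> perms n \<Longrightarrow> 1 \<le> n \<Longrightarrow> 2 * exterior_peaks n \<pi> \<le> n + 1"
  using peak_count_le[of "map Not (descent_word n \<pi>)"] by (simp add: exterior_peaks_eq_peak_count)

text \<open>The permutation \<open>1 3 2 5 4 \<dots> (2p+1) (2p) (2p+2) \<dots> n\<close>, with peaks at \<open>2, 4, \<dots>, 2p\<close>.\<close>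

definition peak_witness :: "nat \<Rightarrow> nat \<Rightarrow> nat" where
  "peak_witness p t = (if 2 \<le> t \<and> t \<le> 2 * p + 1 then (if even t then t + 1 else t - 1) else t)"

lemma peak_witness_perms:
  assumes "2 * p + 1 \<le> n"
  shows "peak_witness p \<in> perms n"
  unfolding perms_def
proof (intro CollectI inj_imp_permutes)
  have "peak_witness p (peak_witness p t) = t" for t
    unfolding peak_witness_def by (auto; presburger)
  then show "inj_on (peak_witness p) {1..n}"
    by (metis inj_onI)
  show "peak_witness p t \<in> {1..n}" if "t \<in> {1..n}" for t
    using that assms unfolding peak_witness_def by (auto; presburger)
qed (use assms in \<open>auto simp: peak_witness_def\<close>)

lemma interior_peaks_peak_witness:
  assumes "2 * p + 1 \<le> n"
  shows "interior_peaks n (peak_witness p) = p"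
proof -
  let ?d = "descent_word n (peak_witness p)"
  have d: "j < n - 1 \<Longrightarrow> ?d ! j = (j < 2 * p \<and> odd j)" for j
    using assms by (simp add: descent_word_nth peak_witness_def; presburger)
  have "{j. Suc j < length ?d \<and> \<not> ?d ! j \<and> ?d ! Suc j} = (\<lambda>i. 2 * i) ` {..<p}"
  proof (rule set_eqI)
    fix j
    have "Suc j < n - 1 \<and> \<not> (j < 2 * p \<and> odd j) \<and> Suc j < 2 * p \<and> odd (Suc j)
        \<longleftrightarrow> (\<exists>i<p. j = 2 * i)"
      using assms by presburger
    then show "j \<in> {j. Suc j < length ?d \<and> \<not> ?d ! j \<and> ?d ! Suc j} \<longleftrightarrow> j \<in> (\<lambda>i. 2 * i) ` {..<p}"
      by (auto simp: d)
  qed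
  then show ?thesis
    by (simp add: interior_peaks_eq_peak_count[OF peak_witness_perms[OF assms]] peak_count_card
        card_image inj_on_def)
qed

definition perm_complement :: "nat \<Rightarrow> (nat \<Rightarrow> nat) \<Rightarrow> nat \<Rightarrow> nat" where
  "perm_complement n \<pi> t = (if t \<in> {1..n} then n + 1 - \<pi> t else t)"

lemma perm_complement_perms:
  assumes "\<pi> \<in> perms n"
  shows "perm_complement n \<pi> \<in> perms n"
  unfolding perms_def
proof (intro CollectI inj_imp_permutes)
  show "inj_on (perm_complement n \<pi>) {1..n}"
    using perms_in[OF assms] perms_inj[OF assms]
    by (fastforce simp: inj_on_def perm_complement_def)
  show "perm_complement n \<pi> t \<in> {1..n}" if "t \<in> {1..n}" for t
    using perms_in[OF assms that] that by (auto simp: perm_complement_def)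
qed (auto simp: perm_complement_def)

lemma descent_word_perm_complement:
  assumes "\<pi> \<in> perms n"
  shows "descent_word n (perm_complement n \<pi>) = map Not (descent_word n \<pi>)"
proof (rule nth_equalityI)
  fix j assume j: "j < length (descent_word n (perm_complement n \<pi>))"
  have "\<pi> (j + 1) \<noteq> \<pi> (j + 2)"
    using perms_inj[OF assms, of "j + 1" "j + 2"] by auto
  moreover have "\<pi> (j + 1) \<le> n" "\<pi> (j + 2) \<le> n"
    using perms_in[OF assms, of "j + 1"] perms_in[OF assms, of "j + 2"] j by auto
  ultimately show "descent_word n (perm_complement n \<pi>) ! j = map Not (descent_word n \<pi>) ! j"
    using j by (auto simp: descent_word_nth perm_complement_def)
qed simp

lemma exterior_peaks_perm_complement:
  assumes "\<pi> \<in> perms n" and "1 \<le> n"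
  shows "exterior_peaks n (perm_complement n \<pi>) = Suc (interior_peaks n \<pi>)"
  using assms
  by (simp add: exterior_peaks_eq_peak_count perm_complement_perms descent_word_perm_complement
      interior_peaks_eq_peak_count comp_def)


section \<open>Ranking and standardization\<close>

definition rank :: "nat \<Rightarrow> (nat \<Rightarrow> 'a::linorder) \<Rightarrow> nat \<Rightarrow> nat" where
  "rank n K i = (if i \<in> {1..n} then card {j \<in> {1..n}. K j \<le> K i} else i)"

lemma rank_out: "i \<notin> {1..n} \<Longrightarrow> rank n K i = i"
  unfolding rank_def by (rule if_not_P)

lemma rank_le_iff:
  assumes "i \<in> {1..n}" "j \<in> {1..n}"
  shows "rank n K j \<le> rank n K i \<longleftrightarrow> K j \<le> K i"
proof
  assume "K j \<le> K i"
  then have "{k \<in> {1..n}. K k \<le> K j} \<subseteq> {k \<in> {1..n}. K k \<le> K i}"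
    by auto
  then show "rank n K j \<le> rank n K i"
    using assms by (simp add: rank_def card_mono)
next
  assume le: "rank n K j \<le> rank n K i"
  show "K j \<le> K i"
  proof (rule ccontr)
    assume "\<not> K j \<le> K i"
    then have "{k \<in> {1..n}. K k \<le> K i} \<subset> {k \<in> {1..n}. K k \<le> K j}"
      using assms by auto
    then have "rank n K i < rank n K j"
      using assms by (simp add: rank_def psubset_card_mono)
    then show False
      using le by simp
  qed
qed

lemma rank_in: "i \<in> {1..n} \<Longrightarrow> rank n K i \<in> {1..n}"
proof -
  assume i: "i \<in> {1..n}"
  then have "0 < card {j \<in> {1..n}. K j \<le> K i}"
    by (subst card_gt_0_iff) auto
  moreover have "card {j \<in> {1..n}. K j \<le> K i} \<le> card {1..n}"
    by (rule card_mono) auto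
  ultimately show ?thesis
    using i by (simp add: rank_def)
qed

lemma rank_permutes:
  assumes "inj_on K {1..n}"
  shows "rank n K permutes {1..n}"
proof (rule inj_imp_permutes)
  show "inj_on (rank n K) {1..n}"
  proof (rule inj_onI)
    fix i j assume "i \<in> {1..n}" "j \<in> {1..n}" "rank n K i = rank n K j"
    then have "K i = K j"
      using rank_le_iff[of i n j K] rank_le_iff[of j n i K] by simp
    then show "i = j"
      using assms \<open>i \<in> {1..n}\<close> \<open>j \<in> {1..n}\<close> by (simp add: inj_on_eq_iff)
  qed
  show "rank n K i \<in> {1..n}" if "i \<in> {1..n}" for i
    using that by (rule rank_in)
qed (simp_all add: rank_in rank_out)

lemma card_le_permutes:
  assumes f: "f permutes {1..n}" and i: "i \<in> {1..n}"
  shows "card {j \<in> {1..n}. f j \<le> f i} = f i"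
proof -
  have "f i \<in> {1..n}"
    using permutes_in_image[OF f] i by simp
  have "f ` {j \<in> {1..n}. f j \<le> f i} = {1..f i}"
  proof
    show "f ` {j \<in> {1..n}. f j \<le> f i} \<subseteq> {1..f i}"
      using permutes_in_image[OF f] by fastforce
    show "{1..f i} \<subseteq> f ` {j \<in> {1..n}. f j \<le> f i}"
    proof
      fix m assume "m \<in> {1..f i}"
      then have "m \<in> f ` {1..n}"
        using permutes_image[OF f] \<open>f i \<in> {1..n}\<close> by simp
      then show "m \<in> f ` {j \<in> {1..n}. f j \<le> f i}"
        using \<open>m \<in> {1..f i}\<close> by auto
    qed
  qed
  moreover have "inj_on f {j \<in> {1..n}. f j \<le> f i}"
    using permutes_inj_on[OF f] by (rule inj_on_subset) auto
  ultimately show ?thesis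
    by (metis card_atLeastAtMost card_image diff_Suc_1)
qed

lemma rank_unique:
  assumes f: "f permutes {1..n}"
    and mono: "\<And>i j. i \<in> {1..n} \<Longrightarrow> j \<in> {1..n} \<Longrightarrow> K j \<le> K i \<Longrightarrow> f j \<le> f i"
  shows "f = rank n K"
proof
  fix i
  show "f i = rank n K i"
  proof (cases "i \<in> {1..n}")
    case True
    have "{j \<in> {1..n}. K j \<le> K i} = {j \<in> {1..n}. f j \<le> f i}"
    proof (intro Collect_cong conj_cong refl iffI)
      fix j assume "j \<in> {1..n}" "f j \<le> f i"
      show "K j \<le> K i"
      proof (rule ccontr)
        assume "\<not> K j \<le> K i"
        then have "f i = f j" and "i \<noteq> j"
          using mono[of j i] \<open>j \<in> {1..n}\<close> True \<open>f j \<le> f i\<close> by auto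
        then show False
          using permutes_inj[OF f] by (auto dest: injD)
      qed
    qed (use mono True in auto)
    then show ?thesis
      using card_le_permutes[OF f True] True by (simp add: rank_def)
  next
    case False
    then show ?thesis
      using permutes_not_in[OF f False] rank_out[OF False, of K] by simp
  qed
qed

lemma rank_comp_eq_id_iff:
  assumes \<pi>: "\<pi> permutes {1..n}" and K: "inj_on K {1..n}"
  shows "rank n K \<circ> \<pi> = id \<longleftrightarrow> (\<forall>t. 1 \<le> t \<and> t < n \<longrightarrow> K (\<pi> t) < K (\<pi> (Suc t)))"
proof
  assume rank_\<pi>: "rank n K \<circ> \<pi> = id"
  show "\<forall>t. 1 \<le> t \<and> t < n \<longrightarrow> K (\<pi> t) < K (\<pi> (Suc t))"
  proof (intro allI impI)
    fix t assume "1 \<le> t \<and> t < n"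
    moreover have "rank n K (\<pi> t) = t" "rank n K (\<pi> (Suc t)) = Suc t"
      using fun_cong[OF rank_\<pi>, of t] fun_cong[OF rank_\<pi>, of "Suc t"] by auto
    ultimately show "K (\<pi> t) < K (\<pi> (Suc t))"
      using rank_le_iff[of "\<pi> t" n "\<pi> (Suc t)" K] permutes_in_image[OF \<pi>] by auto
  qed
next
  assume "\<forall>t. 1 \<le> t \<and> t < n \<longrightarrow> K (\<pi> t) < K (\<pi> (Suc t))"
  then have strict: "K (\<pi> s) < K (\<pi> t)" if "1 \<le> s" "s < t" "t \<le> n" for s t
    using lift_Suc_mono_less_ivl[of "{1..<n}" "K \<circ> \<pi>" s t] that by auto
  have "inv \<pi> = rank n K"
  proof (rule rank_unique[OF permutes_inv[OF \<pi>]])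
    fix i j assume ij: "i \<in> {1..n}" "j \<in> {1..n}" "K j \<le> K i"
    show "inv \<pi> j \<le> inv \<pi> i"
    proof (rule ccontr)
      assume "\<not> inv \<pi> j \<le> inv \<pi> i"
      moreover have "inv \<pi> i \<in> {1..n}" "inv \<pi> j \<in> {1..n}"
        using permutes_in_image[OF permutes_inv[OF \<pi>]] ij by auto
      ultimately have "K (\<pi> (inv \<pi> i)) < K (\<pi> (inv \<pi> j))"
        by (intro strict) auto
      then show False
        using ij permutes_inverses(1)[OF \<pi>] by auto
    qed
  qed
  then show "rank n K \<circ> \<pi> = id"
    using permutes_inv_o(2)[OF \<pi>] by simp
qed

text \<open>Letters of a signed alphabet \<open>L\<close> are \<open>0, \<dots>, length L - 1\<close>, the letter \<open>a\<close> being
  positive if \<open>L ! a\<close>. Standardization numbers equal positive letters from left to right and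
  equal negative letters from right to left.\<close>

definition std_key :: "bool list \<Rightarrow> (nat \<Rightarrow> nat) \<Rightarrow> nat \<Rightarrow> nat \<times> int" where
  "std_key L w i = (w i, if L ! w i then int i else - int i)"

abbreviation std :: "nat \<Rightarrow> bool list \<Rightarrow> (nat \<Rightarrow> nat) \<Rightarrow> nat \<Rightarrow> nat" where
  "std n L w \<equiv> rank n (std_key L w)"

lemma inj_std_key: "inj (std_key L w)"
  by (auto simp: inj_def std_key_def split: if_splits)

lemma std_permutes: "std n L w permutes {1..n}"
  using inj_std_key by (blast intro: rank_permutes inj_on_subset)

definition words :: "nat \<Rightarrow> nat \<Rightarrow> (nat \<Rightarrow> nat) set" where
  "words n m = PiE {1..n} (\<lambda>_. {..<m})"

lemma finite_words: "finite (words n m)"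
  by (simp add: words_def finite_PiE)

lemma words_in: "w \<in> words n m \<Longrightarrow> i \<in> {1..n} \<Longrightarrow> w i < m"
  by (auto simp: words_def PiE_iff)

lemma words_out: "w \<in> words n m \<Longrightarrow> i \<notin> {1..n} \<Longrightarrow> w i = undefined"
  by (auto simp: words_def PiE_iff extensional_def)

lemma wordsI:
  "(\<And>i. i \<in> {1..n} \<Longrightarrow> w i < m) \<Longrightarrow> (\<And>i. i \<notin> {1..n} \<Longrightarrow> w i = undefined) \<Longrightarrow> w \<in> words n m"
  by (auto simp: words_def PiE_iff extensional_def)

text \<open>\<open>std_sum n L\<close> is \<open>\<Psi>(L)\<close>.\<close>

definition std_sum :: "nat \<Rightarrow> bool list \<Rightarrow> (nat \<Rightarrow> nat) \<Rightarrow> rat" where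
  "std_sum n L = perm_sum n (\<lambda>\<pi>. card {w \<in> words n (length L). std n L w \<circ> \<pi> = id})"


section \<open>Counting words by compatible chains\<close>

text \<open>For \<open>std n L w \<circ> \<pi> = id\<close> the word \<open>w \<circ> \<pi>\<close> is weakly increasing; it may repeat a positive
  letter only across an ascent of \<open>\<pi>\<close> and a negative letter only across a descent.
  The flag \<open>g\<close> marks a descent.\<close>

definition chain_step :: "bool list \<Rightarrow> bool \<Rightarrow> nat \<Rightarrow> nat \<Rightarrow> bool" where
  "chain_step L g a b \<longleftrightarrow> a < b \<or> (a = b \<and> (L ! a \<longleftrightarrow> \<not> g))"

definition is_chain :: "bool list \<Rightarrow> bool list \<Rightarrow> nat list \<Rightarrow> bool" where
  "is_chain L d cs \<longleftrightarrow> (\<forall>j < length d. chain_step L (d ! j) (cs ! j) (cs ! Suc j))"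

definition chains_from :: "bool list \<Rightarrow> bool list \<Rightarrow> nat \<Rightarrow> nat list set" where
  "chains_from L d l =
     {cs. length cs = Suc (length d) \<and> set cs \<subseteq> {..<length L} \<and> is_chain L d cs \<and> hd cs = l}"

fun chain_count :: "bool list \<Rightarrow> bool list \<Rightarrow> nat \<Rightarrow> nat" where
  "chain_count L [] l = 1"
| "chain_count L (g # d) l = (\<Sum>l'<length L. if chain_step L g l l' then chain_count L d l' else 0)"

lemma chain_count_map_Not: "chain_count (map Not L) (map Not d) l = chain_count L d l"
  by (induction d arbitrary: l) (auto simp: chain_step_def intro!: sum.cong)

lemma finite_chains_from: "finite (chains_from L d l)"
proof (rule finite_subset)
  show "chains_from L d l \<subseteq> {cs. set cs \<subseteq> {..<length L} \<and> length cs = Suc (length d)}"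
    by (auto simp: chains_from_def)
qed (simp add: finite_lists_length_eq)

lemma is_chain_Cons:
  "cs \<noteq> [] \<Longrightarrow> is_chain L (g # d) (a # cs) \<longleftrightarrow> chain_step L g a (hd cs) \<and> is_chain L d cs"
  unfolding is_chain_def by (simp add: All_less_Suc2 hd_conv_nth)

lemma chains_from_Cons:
  "chains_from L (g # d) l = (#) l ` (\<Union>l'\<in>{l'. l' < length L \<and> chain_step L g l l'}. chains_from L d l')"
proof (rule set_eqI, rule iffI)
  fix cs assume cs: "cs \<in> chains_from L (g # d) l"
  then obtain cs' where cs': "cs = l # cs'" "cs' \<noteq> []"
    by (auto simp: chains_from_def length_Suc_conv)
  then have "cs' \<in> chains_from L d (hd cs')" "hd cs' < length L" "chain_step L g l (hd cs')"
    using cs by (auto simp: chains_from_def is_chain_Cons hd_in_set[OF cs'(2)] subset_iff)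
  then show "cs \<in> (#) l ` (\<Union>l'\<in>{l'. l' < length L \<and> chain_step L g l l'}. chains_from L d l')"
    using cs' by blast
next
  fix cs assume "cs \<in> (#) l ` (\<Union>l'\<in>{l'. l' < length L \<and> chain_step L g l l'}. chains_from L d l')"
  then obtain l' cs' where
    cs: "cs = l # cs'" "l' < length L" "chain_step L g l l'" "cs' \<in> chains_from L d l'"
    by blast
  moreover have "cs' \<noteq> []"
    using cs by (auto simp: chains_from_def)
  moreover have "l < length L"
    using cs(2,3) by (auto simp: chain_step_def)
  ultimately show "cs \<in> chains_from L (g # d) l"
    by (auto simp: chains_from_def is_chain_Cons)
qed

lemma card_chains_from: "l < length L \<Longrightarrow> card (chains_from L d l) = chain_count L d l"
proof (induction d arbitrary: l)
  case Nil
  then have "chains_from L [] l = {[l]}"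
    by (auto simp: chains_from_def is_chain_def length_Suc_conv)
  then show ?case
    by simp
next
  case (Cons g d)
  have "card (chains_from L (g # d) l)
      = card (\<Union>l'\<in>{l'. l' < length L \<and> chain_step L g l l'}. chains_from L d l')"
    unfolding chains_from_Cons by (rule card_image) simp
  also have "\<dots> = (\<Sum>l'\<in>{l'. l' < length L \<and> chain_step L g l l'}. card (chains_from L d l'))"
    by (rule card_UN_disjoint) (simp_all add: finite_chains_from, auto simp: chains_from_def)
  also have "\<dots> = (\<Sum>l'\<in>{l' \<in> {..<length L}. chain_step L g l l'}. chain_count L d l')"
    using Cons.IH by (intro sum.cong) auto
  also have "\<dots> = chain_count L (g # d) l"
    by (simp only: chain_count.simps sum.inter_filter[OF finite_lessThan])
  finally show ?case .
qed

lemma card_chains: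
  "card {cs. length cs = Suc (length d) \<and> set cs \<subseteq> {..<length L} \<and> is_chain L d cs}
     = (\<Sum>l<length L. chain_count L d l)"
proof -
  have "{cs. length cs = Suc (length d) \<and> set cs \<subseteq> {..<length L} \<and> is_chain L d cs}
      = (\<Union>l<length L. chains_from L d l)"
    by (auto simp: chains_from_def length_Suc_conv)
  moreover have "card (\<Union>l<length L. chains_from L d l) = (\<Sum>l<length L. card (chains_from L d l))"
    by (rule card_UN_disjoint) (simp_all add: finite_chains_from, auto simp: chains_from_def)
  ultimately show ?thesis
    by (simp add: card_chains_from)
qed

lemma bij_betw_words_lists:
  "bij_betw (\<lambda>w. map w [1..<Suc n]) (words n m) {cs. length cs = n \<and> set cs \<subseteq> {..<m}}"
proof (rule bij_betw_byWitness[where f' = "\<lambda>cs i. if i \<in> {1..n} then cs ! (i - 1) else undefined"])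
  show "\<forall>w\<in>words n m. (\<lambda>i. if i \<in> {1..n} then map w [1..<Suc n] ! (i - 1) else undefined) = w"
    by (auto simp: fun_eq_iff words_out nth_append simp del: upt_Suc)
  show "\<forall>cs\<in>{cs. length cs = n \<and> set cs \<subseteq> {..<m}}.
      map (\<lambda>i. if i \<in> {1..n} then cs ! (i - 1) else undefined) [1..<Suc n] = cs"
    by (auto intro!: nth_equalityI simp del: upt_Suc)
  show "(\<lambda>w. map w [1..<Suc n]) ` words n m \<subseteq> {cs. length cs = n \<and> set cs \<subseteq> {..<m}}"
    by (auto simp: words_in simp del: upt_Suc)
  show "(\<lambda>cs i. if i \<in> {1..n} then cs ! (i - 1) else undefined) ` {cs. length cs = n \<and> set cs \<subseteq> {..<m}}
      \<subseteq> words n m"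
    by (auto intro!: wordsI simp: subset_iff)
qed

lemma words_comp_permutes:
  assumes "w \<in> words n m" and "\<sigma> permutes {1..n}"
  shows "w \<circ> \<sigma> \<in> words n m"
proof (rule wordsI)
  show "(w \<circ> \<sigma>) i < m" if "i \<in> {1..n}" for i
    using permutes_in_image[OF assms(2)] words_in[OF assms(1)] that by simp
  show "(w \<circ> \<sigma>) i = undefined" if "i \<notin> {1..n}" for i
    using permutes_not_in[OF assms(2) that] words_out[OF assms(1) that] by simp
qed

lemma bij_betw_words_comp:
  assumes "\<pi> permutes {1..n}"
  shows "bij_betw (\<lambda>w. w \<circ> \<pi>) (words n m) (words n m)"
proof (rule bij_betw_byWitness[where f' = "\<lambda>w. w \<circ> inv \<pi>"])
  show "(\<lambda>w. w \<circ> \<pi>) ` words n m \<subseteq> words n m" "(\<lambda>w. w \<circ> inv \<pi>) ` words n m \<subseteq> words n m"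
    using words_comp_permutes assms permutes_inv by blast+
  show "\<forall>w\<in>words n m. w \<circ> \<pi> \<circ> inv \<pi> = w" "\<forall>w\<in>words n m. w \<circ> inv \<pi> \<circ> \<pi> = w"
    by (simp_all add: comp_assoc permutes_inv_o[OF assms])
qed

lemma std_key_less_iff_chain_step:
  assumes "\<pi> \<in> perms n"
  shows "std_key L w (\<pi> t) < std_key L w (\<pi> (Suc t))
      \<longleftrightarrow> chain_step L (\<pi> (Suc t) < \<pi> t) (w (\<pi> t)) (w (\<pi> (Suc t)))"
proof -
  have "\<pi> t \<noteq> \<pi> (Suc t)"
    using perms_inj[OF assms, of t "Suc t"] by auto
  then show ?thesis
    by (auto simp: std_key_def chain_step_def)
qed

lemma std_comp_eq_id_iff_is_chain:
  assumes "\<pi> \<in> perms n"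
  shows "std n L w \<circ> \<pi> = id \<longleftrightarrow> is_chain L (descent_word n \<pi>) (map (w \<circ> \<pi>) [1..<Suc n])"
proof -
  have "std n L w \<circ> \<pi> = id \<longleftrightarrow>
      (\<forall>t. 1 \<le> t \<and> t < n \<longrightarrow> chain_step L (\<pi> (Suc t) < \<pi> t) (w (\<pi> t)) (w (\<pi> (Suc t))))"
    using rank_comp_eq_id_iff[OF perms_permutes[OF assms] inj_on_subset[OF inj_std_key]]
    by (simp add: std_key_less_iff_chain_step[OF assms])
  also have "\<dots> \<longleftrightarrow> (\<forall>j < n - 1. chain_step L (\<pi> (j + 2) < \<pi> (j + 1)) (w (\<pi> (j + 1))) (w (\<pi> (j + 2))))"
  proof safe
    fix t assume "\<forall>j < n - 1. chain_step L (\<pi> (j + 2) < \<pi> (j + 1)) (w (\<pi> (j + 1))) (w (\<pi> (j + 2)))"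
      and "1 \<le> t" "t < n"
    then show "chain_step L (\<pi> (Suc t) < \<pi> t) (w (\<pi> t)) (w (\<pi> (Suc t)))"
      by (cases t) auto
  qed auto
  also have "\<dots> \<longleftrightarrow> is_chain L (descent_word n \<pi>) (map (w \<circ> \<pi>) [1..<Suc n])"
    by (simp add: is_chain_def descent_word_nth nth_append del: upt_Suc)
  finally show ?thesis .
qed

lemma std_sum_apply:
  assumes "\<pi> \<in> perms n" and "1 \<le> n"
  shows "std_sum n L \<pi> = of_nat (\<Sum>l<length L. chain_count L (descent_word n \<pi>) l)"
proof -
  let ?f = "\<lambda>w. map (w \<circ> \<pi>) [1..<Suc n]"
  have "bij_betw ?f (words n (length L)) {cs. length cs = n \<and> set cs \<subseteq> {..<length L}}"
    using bij_betw_trans[OF bij_betw_words_comp[OF perms_permutes[OF assms(1)]] bij_betw_words_lists]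
    by (simp add: comp_def)
  then have "bij_betw ?f {w \<in> words n (length L). std n L w \<circ> \<pi> = id}
      {cs \<in> {cs. length cs = n \<and> set cs \<subseteq> {..<length L}}. is_chain L (descent_word n \<pi>) cs}"
    by (rule bij_betw_Collect) (simp add: std_comp_eq_id_iff_is_chain[OF assms(1)])
  then have "card {w \<in> words n (length L). std n L w \<circ> \<pi> = id}
      = card {cs. length cs = Suc (length (descent_word n \<pi>)) \<and> set cs \<subseteq> {..<length L}
               \<and> is_chain L (descent_word n \<pi>) cs}"
    using assms(2) by (simp add: bij_betw_same_card conj_assoc)
  then show ?thesis
    using assms(1) card_chains[of "descent_word n \<pi>" L] by (simp add: std_sum_def perm_sum_def)
qed


section \<open>Products of signed alphabets\<close>

text \<open>The letter \<open>(a, b)\<close> of \<open>alph_prod L M\<close>, with \<open>a\<close> from \<open>L\<close> and \<open>b\<close> from \<open>M\<close>, is encoded as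
  \<open>prod_letter L M a b\<close>: letters are ordered lexicographically, with the order of \<open>M\<close> reversed
  under a negative \<open>a\<close>, and the sign of \<open>(a, b)\<close> is the product of the signs of \<open>a\<close> and \<open>b\<close>.\<close>

definition prod_letter :: "bool list \<Rightarrow> bool list \<Rightarrow> nat \<Rightarrow> nat \<Rightarrow> nat" where
  "prod_letter L M a b = a * length M + (if L ! a then b else length M - 1 - b)"

definition inner_letter :: "bool list \<Rightarrow> bool list \<Rightarrow> nat \<Rightarrow> nat" where
  "inner_letter L M c =
     (if L ! (c div length M) then c mod length M else length M - 1 - c mod length M)"

definition alph_prod :: "bool list \<Rightarrow> bool list \<Rightarrow> bool list" where
  "alph_prod L M =
     map (\<lambda>c. L ! (c div length M) \<longleftrightarrow> M ! inner_letter L M c) [0..<length L * length M]"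

lemma length_alph_prod [simp]: "length (alph_prod L M) = length L * length M"
  by (simp add: alph_prod_def)

lemma restrict_in_words: "(\<And>i. i \<in> {1..n} \<Longrightarrow> f i < m) \<Longrightarrow> (\<lambda>i\<in>{1..n}. f i) \<in> words n m"
  by (simp add: words_def restrict_PiE_iff)

lemma words_eqI: "w \<in> words n m \<Longrightarrow> (\<And>i. i \<in> {1..n} \<Longrightarrow> f i = w i) \<Longrightarrow> (\<lambda>i\<in>{1..n}. f i) = w"
  by (metis PiE_restrict restrict_ext words_def)

definition merge_word :: "nat \<Rightarrow> bool list \<Rightarrow> bool list \<Rightarrow> (nat \<Rightarrow> nat) \<Rightarrow> (nat \<Rightarrow> nat) \<Rightarrow> nat \<Rightarrow> nat" where
  "merge_word n L M v x = (\<lambda>i\<in>{1..n}. prod_letter L M (x (std n M v i)) (v i))"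

definition inner_word :: "nat \<Rightarrow> bool list \<Rightarrow> bool list \<Rightarrow> (nat \<Rightarrow> nat) \<Rightarrow> nat \<Rightarrow> nat" where
  "inner_word n L M u = (\<lambda>i\<in>{1..n}. inner_letter L M (u i))"

definition outer_word :: "nat \<Rightarrow> bool list \<Rightarrow> bool list \<Rightarrow> (nat \<Rightarrow> nat) \<Rightarrow> nat \<Rightarrow> nat" where
  "outer_word n L M u = (\<lambda>j\<in>{1..n}. u (inv (std n M (inner_word n L M u)) j) div length M)"

lemma inv_std_in: "j \<in> {1..n} \<Longrightarrow> inv (std n L w) j \<in> {1..n}"
  using permutes_in_image[OF permutes_inv[OF std_permutes]] by blast

context
  fixes L M :: "bool list"
  assumes M_nonempty: "length M > 0"
begin

lemma prod_letter_div: "b < length M \<Longrightarrow> prod_letter L M a b div length M = a"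
  using M_nonempty by (auto simp: prod_letter_def)

lemma prod_letter_less: "a < length L \<Longrightarrow> b < length M \<Longrightarrow> prod_letter L M a b < length L * length M"
proof -
  assume "a < length L" "b < length M"
  then have "prod_letter L M a b < Suc a * length M"
    by (auto simp: prod_letter_def)
  also have "\<dots> \<le> length L * length M"
    using \<open>a < length L\<close> by (intro mult_right_mono) auto
  finally show ?thesis .
qed

lemma prod_letter_mod:
  "b < length M \<Longrightarrow> prod_letter L M a b mod length M = (if L ! a then b else length M - 1 - b)"
  using M_nonempty by (auto simp: prod_letter_def)

lemma inner_letter_prod_letter: "b < length M \<Longrightarrow> inner_letter L M (prod_letter L M a b) = b"
  by (auto simp: inner_letter_def prod_letter_div prod_letter_mod)

lemma inner_letter_less: "inner_letter L M c < length M"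
  using M_nonempty by (auto simp: inner_letter_def)

lemma prod_letter_inner_letter: "prod_letter L M (c div length M) (inner_letter L M c) = c"
proof -
  have "c mod length M < length M"
    using M_nonempty by simp
  then show ?thesis
    by (auto simp: prod_letter_def inner_letter_def)
qed

lemma alph_prod_nth_prod_letter:
  "a < length L \<Longrightarrow> b < length M \<Longrightarrow> alph_prod L M ! prod_letter L M a b \<longleftrightarrow> (L ! a \<longleftrightarrow> M ! b)"
  using prod_letter_less[of a b] by (simp add: alph_prod_def prod_letter_div inner_letter_prod_letter)

lemma prod_letter_less_iff:
  assumes "b < length M" "b' < length M"
  shows "prod_letter L M a b < prod_letter L M a' b'
    \<longleftrightarrow> a < a' \<or> (a = a' \<and> (if L ! a then b < b' else b' < b))"
proof
  assume less: "prod_letter L M a b < prod_letter L M a' b'"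
  then have "a \<le> a'"
    using div_le_mono[OF less_imp_le[OF less], of "length M"] by (simp add: assms prod_letter_div)
  then show "a < a' \<or> (a = a' \<and> (if L ! a then b < b' else b' < b))"
    using less assms by (auto simp: prod_letter_def)
next
  assume "a < a' \<or> (a = a' \<and> (if L ! a then b < b' else b' < b))"
  then show "prod_letter L M a b < prod_letter L M a' b'"
  proof
    assume "a < a'"
    then have "prod_letter L M a b < Suc a * length M"
      using assms by (auto simp: prod_letter_def)
    also have "\<dots> \<le> a' * length M"
      using \<open>a < a'\<close> by (intro mult_right_mono) auto
    finally show ?thesis
      by (simp add: prod_letter_def)
  qed (use assms in \<open>auto simp: prod_letter_def split: if_splits\<close>)
qed

lemma prod_letter_eq_iff:
  assumes "b < length M" "b' < length M"
  shows "prod_letter L M a b = prod_letter L M a' b' \<longleftrightarrow> a = a' \<and> b = b'"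
  using prod_letter_div[OF assms(1), of a] prod_letter_div[OF assms(2), of a']
    inner_letter_prod_letter[OF assms(1), of a] inner_letter_prod_letter[OF assms(2), of a']
  by metis

lemma prod_key_le:
  fixes s s' :: int
  assumes "b < length M" "b' < length M"
    and le: "(prod_letter L M a b, if L ! a \<longleftrightarrow> M ! b then s else - s)
      \<le> (prod_letter L M a' b', if L ! a' \<longleftrightarrow> M ! b' then s' else - s')"
  shows "a < a' \<or> a = a' \<and>
    (if L ! a then (b, if M ! b then s else - s) \<le> (b', if M ! b' then s' else - s')
     else (b', if M ! b' then s' else - s') \<le> (b, if M ! b then s else - s))"
proof -
  from le have "prod_letter L M a b < prod_letter L M a' b' \<or> prod_letter L M a b = prod_letter L M a' b'
      \<and> (if L ! a \<longleftrightarrow> M ! b then s else - s) \<le> (if L ! a' \<longleftrightarrow> M ! b' then s' else - s')"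
    by (auto simp: less_eq_prod_def)
  then show ?thesis
    unfolding prod_letter_less_iff[OF assms(1,2)] prod_letter_eq_iff[OF assms(1,2)]
    by (auto simp: less_eq_prod_def)
qed


lemma std_merge_word:
  assumes v: "v \<in> words n (length M)" and x: "x \<in> words n (length L)"
  shows "std n (alph_prod L M) (merge_word n L M v x) = std n L x \<circ> std n M v"
proof (rule sym, rule rank_unique)
  show "std n L x \<circ> std n M v permutes {1..n}"
    by (rule permutes_compose[OF std_permutes std_permutes])
next
  fix i j assume i: "i \<in> {1..n}" and j: "j \<in> {1..n}"
    and le: "std_key (alph_prod L M) (merge_word n L M v x) j
      \<le> std_key (alph_prod L M) (merge_word n L M v x) i"
  let ?a = "\<lambda>k. x (std n M v k)"
  have std_in: "std n M v i \<in> {1..n}" "std n M v j \<in> {1..n}"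
    using rank_in[OF i] rank_in[OF j] .
  have letters: "?a i < length L" "?a j < length L" "v i < length M" "v j < length M"
    using words_in[OF x std_in(1)] words_in[OF x std_in(2)] words_in[OF v i] words_in[OF v j] .
  have key: "std_key (alph_prod L M) (merge_word n L M v x) k
      = (prod_letter L M (?a k) (v k), if L ! ?a k \<longleftrightarrow> M ! v k then int k else - int k)"
    if "k \<in> {1..n}" for k
  proof -
    have "?a k < length L" "v k < length M"
      using words_in[OF x rank_in[OF that]] words_in[OF v that] .
    then show ?thesis
      using that by (simp add: std_key_def merge_word_def alph_prod_nth_prod_letter)
  qed
  have "?a j < ?a i \<or> ?a j = ?a i \<and>
      (if L ! ?a j then std_key M v j \<le> std_key M v i else std_key M v i \<le> std_key M v j)"
    using prod_key_le[OF letters(4,3) le[unfolded key[OF j] key[OF i]]] unfolding std_key_def .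
  then have "?a j < ?a i \<or> ?a j = ?a i \<and>
      (if L ! ?a j then std n M v j \<le> std n M v i else std n M v i \<le> std n M v j)"
    unfolding rank_le_iff[OF i j] rank_le_iff[OF j i] .
  then have "std_key L x (std n M v j) \<le> std_key L x (std n M v i)"
    by (auto simp: std_key_def less_eq_prod_def)
  then show "(std n L x \<circ> std n M v) j \<le> (std n L x \<circ> std n M v) i"
    using rank_le_iff[OF std_in(1,2), of "std_key L x"] by simp
qed

lemma merge_word_in_words:
  assumes "v \<in> words n (length M)" and "x \<in> words n (length L)"
  shows "merge_word n L M v x \<in> words n (length L * length M)"
  unfolding merge_word_def
proof (rule restrict_in_words)
  fix i assume i: "i \<in> {1..n}"
  have "std n M v i \<in> {1..n}"
    by (rule rank_in[OF i])
  then show "prod_letter L M (x (std n M v i)) (v i) < length L * length M"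
    using assms i by (intro prod_letter_less words_in)
qed

lemma inner_word_merge_word:
  assumes "v \<in> words n (length M)"
  shows "inner_word n L M (merge_word n L M v x) = v"
  unfolding inner_word_def
  using words_in[OF assms] by (intro words_eqI[OF assms])
    (simp add: merge_word_def inner_letter_prod_letter)

lemma outer_word_merge_word:
  assumes v: "v \<in> words n (length M)" and x: "x \<in> words n (length L)"
  shows "outer_word n L M (merge_word n L M v x) = x"
  unfolding outer_word_def inner_word_merge_word[OF v]
proof (rule words_eqI[OF x])
  fix j assume j: "j \<in> {1..n}"
  let ?k = "inv (std n M v) j"
  have "std n M v ?k = j"
    by (rule permutes_inverses(1)[OF std_permutes])
  then show "merge_word n L M v x ?k div length M = x j"
    using inv_std_in[OF j] words_in[OF v inv_std_in[OF j]]
    by (simp add: merge_word_def prod_letter_div)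
qed

lemma merge_word_split:
  assumes u: "u \<in> words n (length L * length M)"
  shows "merge_word n L M (inner_word n L M u) (outer_word n L M u) = u"
  unfolding merge_word_def
proof (rule words_eqI[OF u])
  fix i assume i: "i \<in> {1..n}"
  let ?r = "std n M (inner_word n L M u)"
  have "inv ?r (?r i) = i"
    by (rule permutes_inverses(2)[OF std_permutes])
  then show "prod_letter L M (outer_word n L M u (?r i)) (inner_word n L M u i) = u i"
    using i rank_in[OF i, of "std_key M (inner_word n L M u)"]
    by (simp add: outer_word_def inner_word_def prod_letter_inner_letter)
qed

lemma split_word_in_words:
  assumes u: "u \<in> words n (length L * length M)"
  shows "inner_word n L M u \<in> words n (length M)" and "outer_word n L M u \<in> words n (length L)"
proof -
  show "inner_word n L M u \<in> words n (length M)"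
    unfolding inner_word_def by (intro restrict_in_words inner_letter_less)
  show "outer_word n L M u \<in> words n (length L)"
    unfolding outer_word_def using words_in[OF u inv_std_in] M_nonempty
    by (intro restrict_in_words) (simp add: less_mult_imp_div_less)
qed

lemma bij_betw_merge_word:
  "bij_betw (\<lambda>(v, x). merge_word n L M v x) (words n (length M) \<times> words n (length L))
     (words n (length L * length M))"
  by (rule bij_betw_byWitness[where f' = "\<lambda>u. (inner_word n L M u, outer_word n L M u)"])
    (auto simp: inner_word_merge_word outer_word_merge_word merge_word_split merge_word_in_words
      split_word_in_words)

end

lemma permutes_inv_eq_iff_comp_eq_id:
  assumes "f permutes S"
  shows "inv f = \<sigma> \<longleftrightarrow> f \<circ> \<sigma> = id"
proof
  assume "f \<circ> \<sigma> = id"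
  then have "inv f = inv f \<circ> (f \<circ> \<sigma>)"
    by simp
  also have "\<dots> = \<sigma>"
    by (simp add: comp_assoc[symmetric] permutes_inv_o(2)[OF assms])
  finally show "inv f = \<sigma>" .
qed (use permutes_inv_o(1)[OF assms] in blast)

lemma gmult_std_sum_apply:
  assumes "\<pi> \<in> perms n"
  shows "gmult n (std_sum n M) (std_sum n L) \<pi>
    = of_nat (card {p \<in> words n (length M) \<times> words n (length L).
        std n L (snd p) \<circ> std n M (fst p) \<circ> \<pi> = id})"
proof -
  let ?V = "words n (length M)" and ?X = "words n (length L)"
  define B where "B \<sigma> = card {x \<in> ?X. std n L x \<circ> (inv \<sigma> \<circ> \<pi>) = id}" for \<sigma>
  have "gmult n (std_sum n M) (std_sum n L) \<pi>
      = of_nat (\<Sum>\<sigma>\<in>perms n. card {v \<in> ?V. std n M v \<circ> \<sigma> = id} * B \<sigma>)"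
    using assms
    by (simp add: gmult_def std_sum_def perm_sum_def B_def perms_def permutes_compose permutes_inv)
  also have "(\<Sum>\<sigma>\<in>perms n. card {v \<in> ?V. std n M v \<circ> \<sigma> = id} * B \<sigma>)
      = (\<Sum>\<sigma>\<in>perms n. \<Sum>v\<in>{v \<in> ?V. inv (std n M v) = \<sigma>}. B (inv (std n M v)))"
  proof (rule sum.cong[OF refl])
    fix \<sigma>
    have "{v \<in> ?V. inv (std n M v) = \<sigma>} = {v \<in> ?V. std n M v \<circ> \<sigma> = id}"
      using permutes_inv_eq_iff_comp_eq_id[OF std_permutes] by blast
    moreover have "(\<Sum>v\<in>{v \<in> ?V. inv (std n M v) = \<sigma>}. B (inv (std n M v)))
        = (\<Sum>v\<in>{v \<in> ?V. inv (std n M v) = \<sigma>}. B \<sigma>)"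
      by (rule sum.cong) auto
    ultimately show "card {v \<in> ?V. std n M v \<circ> \<sigma> = id} * B \<sigma>
        = (\<Sum>v\<in>{v \<in> ?V. inv (std n M v) = \<sigma>}. B (inv (std n M v)))"
      by simp
  qed
  also have "\<dots> = (\<Sum>v\<in>?V. B (inv (std n M v)))"
    by (rule sum.group[OF finite_words perms_finite])
      (use permutes_inv[OF std_permutes] in \<open>auto simp: perms_def\<close>)
  also have "\<dots> = (\<Sum>v\<in>?V. card {x \<in> ?X. std n L x \<circ> std n M v \<circ> \<pi> = id})"
    by (simp add: B_def permutes_inv_inv[OF std_permutes] comp_assoc)
  also have "\<dots> = card (SIGMA v:?V. {x \<in> ?X. std n L x \<circ> std n M v \<circ> \<pi> = id})"
    by (simp add: card_SigmaI finite_words)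
  also have "(SIGMA v:?V. {x \<in> ?X. std n L x \<circ> std n M v \<circ> \<pi> = id})
      = {p \<in> ?V \<times> ?X. std n L (snd p) \<circ> std n M (fst p) \<circ> \<pi> = id}"
    by auto
  finally show ?thesis .
qed

theorem std_sum_mult:
  assumes "length M > 0"
  shows "gmult n (std_sum n M) (std_sum n L) = std_sum n (alph_prod L M)"
proof
  fix \<pi>
  show "gmult n (std_sum n M) (std_sum n L) \<pi> = std_sum n (alph_prod L M) \<pi>"
  proof (cases "\<pi> \<in> perms n")
    case True
    have "bij_betw (\<lambda>(v, x). merge_word n L M v x)
        {p \<in> words n (length M) \<times> words n (length L). std n L (snd p) \<circ> std n M (fst p) \<circ> \<pi> = id}
        {u \<in> words n (length L * length M). std n (alph_prod L M) u \<circ> \<pi> = id}"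
      by (rule bij_betw_Collect[OF bij_betw_merge_word[OF assms]]) (auto simp: std_merge_word[OF assms])
    then show ?thesis
      unfolding gmult_std_sum_apply[OF True] using True
      by (simp add: bij_betw_same_card std_sum_def perm_sum_def)
  qed (simp add: gmult_def std_sum_def perm_sum_def)
qed


section \<open>Alternating alphabets\<close>

definition alt_alph :: "bool \<Rightarrow> nat \<Rightarrow> bool list" where
  "alt_alph b k = map (\<lambda>l. odd l = b) [0..<2 * k]"

lemma length_alt_alph [simp]: "length (alt_alph b k) = 2 * k"
  by (simp add: alt_alph_def)

lemma alt_alph_nth: "l < 2 * k \<Longrightarrow> alt_alph b k ! l = (odd l = b)"
  by (simp add: alt_alph_def)

lemma alt_alph_False: "alt_alph False k = map Not (alt_alph True k)"
  by (simp add: alt_alph_def)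

lemma alph_prod_alt_alph:
  assumes "1 \<le> l"
  shows "alph_prod (alt_alph b' k) (alt_alph b l) = alt_alph b (2 * k * l)"
proof (rule nth_equalityI)
  fix c assume "c < length (alph_prod (alt_alph b' k) (alt_alph b l))"
  then have c: "c < 2 * k * (2 * l)"
    by simp
  let ?q = "c div (2 * l)" and ?r = "c mod (2 * l)"
  have q: "?q < 2 * k" and r: "?r < 2 * l" "2 * l - 1 - ?r < 2 * l"
    using c assms by (simp_all add: less_mult_imp_div_less)
  have "odd (2 * l - 1 - x) \<longleftrightarrow> even x" if "x < 2 * l" for x
    using that by presburger
  moreover have "?r mod 2 = c mod 2"
    by (simp add: mod_mod_cancel)
  ultimately have parity: "odd (2 * l - 1 - ?r) \<longleftrightarrow> even ?r" "odd ?r \<longleftrightarrow> odd c"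
    using r(1) by (auto simp only: odd_iff_mod_2_eq_one)
  have "alph_prod (alt_alph b' k) (alt_alph b l) ! c
      = (alt_alph b' k ! ?q \<longleftrightarrow> alt_alph b l ! inner_letter (alt_alph b' k) (alt_alph b l) c)"
    using c by (simp add: alph_prod_def mult.commute)
  also have "\<dots> = (odd c = b)"
    using q r parity by (cases "odd ?q = b'") (auto simp: inner_letter_def alt_alph_nth)
  finally show "alph_prod (alt_alph b' k) (alt_alph b l) ! c = alt_alph b (2 * k * l) ! c"
    using c by (simp add: alt_alph_nth mult_ac)
qed (simp add: mult_ac)
lemma sum_lessThan_double: "(\<Sum>l<2 * m. f l) = (\<Sum>b<m. f (2 * b) + f (2 * b + 1))" for m :: nat
  by (induction m) (simp_all add: sum.distrib add_ac)

lemma sum_choose_diff: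
  assumes "c \<le> m"
  shows "(\<Sum>b\<in>{c..<m}. (m - Suc b) choose s) = (m - c) choose Suc s"
proof -
  have "(\<Sum>b\<in>{c..<m}. (m - Suc b) choose s) = (\<Sum>j<m - c. j choose s)"
    by (rule sum.reindex_bij_witness[where i = "\<lambda>j. m - 1 - j" and j = "\<lambda>b. m - 1 - b"]) auto
  also have "\<dots> = (m - c) choose Suc s"
    by (cases "m - c") (simp_all add: lessThan_Suc_atMost sum_choose_upper)
  finally show ?thesis .
qed

text \<open>In \<open>alt_alph True m\<close> the letters \<open>2 a\<close> (negative) and \<open>2 a + 1\<close> (positive) form the
  \<open>a\<close>-th pair. A chain step stays in a pair or moves to a later pair; within a pair
  it is governed by \<open>pair_step\<close> on the signs.\<close>

definition pair_step :: "bool \<Rightarrow> bool \<Rightarrow> bool \<Rightarrow> bool" where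
  "pair_step s s' g \<longleftrightarrow> (s = s' \<and> (s \<longleftrightarrow> \<not> g)) \<or> (\<not> s \<and> s')"

lemma chain_step_alt_alph:
  assumes "l < 2 * m" "l' < 2 * m"
  shows "chain_step (alt_alph True m) g l l'
    \<longleftrightarrow> l div 2 < l' div 2 \<or> (l div 2 = l' div 2 \<and> pair_step (odd l) (odd l') g)"
  using assms by (auto simp: chain_step_def pair_step_def alt_alph_nth) presburger+

lemma chain_count_alt_alph_Cons:
  assumes "l < 2 * m"
  shows "chain_count (alt_alph True m) (g # d) l
    = (if pair_step (odd l) False g then chain_count (alt_alph True m) d (2 * (l div 2)) else 0)
      + (if pair_step (odd l) True g then chain_count (alt_alph True m) d (2 * (l div 2) + 1) else 0)
      + (\<Sum>b\<in>{Suc (l div 2)..<m}.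
          chain_count (alt_alph True m) d (2 * b) + chain_count (alt_alph True m) d (2 * b + 1))"
proof -
  let ?cc = "chain_count (alt_alph True m) d"
  define a where "a = l div 2"
  define F where "F l' = (if chain_step (alt_alph True m) g l l' then ?cc l' else 0)" for l'
  have a: "a < m"
    using assms by (simp add: a_def)
  have "chain_count (alt_alph True m) (g # d) l = (\<Sum>l'<2 * m. F l')"
    by (simp add: F_def)
  also have "\<dots> = (\<Sum>b<m. F (2 * b) + F (2 * b + 1))"
    by (rule sum_lessThan_double)
  also have "\<dots> = (\<Sum>b\<in>{..<a} \<union> {a} \<union> {Suc a..<m}. F (2 * b) + F (2 * b + 1))"
    using a by (intro sum.cong) auto
  also have "\<dots> = (\<Sum>b<a. F (2 * b) + F (2 * b + 1)) + (F (2 * a) + F (2 * a + 1))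
      + (\<Sum>b\<in>{Suc a..<m}. F (2 * b) + F (2 * b + 1))"
    by (subst sum.union_disjoint; auto)+
  also have "(\<Sum>b<a. F (2 * b) + F (2 * b + 1)) = 0"
    using assms by (intro sum.neutral) (auto simp: F_def chain_step_alt_alph a_def)
  also have "(\<Sum>b\<in>{Suc a..<m}. F (2 * b) + F (2 * b + 1))
      = (\<Sum>b\<in>{Suc a..<m}. ?cc (2 * b) + ?cc (2 * b + 1))"
    using assms by (intro sum.cong) (auto simp: F_def chain_step_alt_alph a_def)
  finally show ?thesis
    using assms a by (simp add: F_def chain_step_alt_alph a_def)
qed

definition coeff_pairing :: "(nat \<Rightarrow> nat) \<Rightarrow> nat poly \<Rightarrow> nat" where
  "coeff_pairing h p = (\<Sum>s\<le>degree p. h s * coeff p s)"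

lemma coeff_pairing_bound:
  "degree p \<le> N \<Longrightarrow> coeff_pairing h p = (\<Sum>s\<le>N. h s * coeff p s)"
  unfolding coeff_pairing_def by (rule sum.mono_neutral_left) (auto simp: coeff_eq_0)

lemma coeff_pairing_add: "coeff_pairing h (p + q) = coeff_pairing h p + coeff_pairing h q"
proof -
  let ?N = "max (degree p) (degree q)"
  have "degree (p + q) \<le> ?N"
    by (rule degree_add_le) auto
  then show ?thesis
    by (simp add: coeff_pairing_bound[of _ ?N] sum.distrib algebra_simps)
qed

lemma coeff_pairing_0 [simp]: "coeff_pairing h 0 = 0"
  by (simp add: coeff_pairing_def)

lemma coeff_pairing_1 [simp]: "coeff_pairing h 1 = h 0"
  by (simp add: coeff_pairing_def)

definition poly_X :: "nat poly" where
  "poly_X = [:0, 1:]"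

lemma coeff_pairing_X_mult: "coeff_pairing h (poly_X * p) = coeff_pairing (\<lambda>s. h (Suc s)) p"
proof -
  have "poly_X * p = pCons 0 p"
    by (simp add: poly_X_def del: One_nat_def)
  then have "coeff_pairing h (poly_X * p) = (\<Sum>s\<le>Suc (degree p). h s * coeff (pCons 0 p) s)"
    using coeff_pairing_bound[OF degree_pCons_le] by simp
  also have "\<dots> = (\<Sum>s\<le>degree p. h (Suc s) * coeff p s)"
    by (subst sum.atMost_Suc_shift) (simp add: coeff_eq_0)
  finally show ?thesis
    by (simp add: coeff_pairing_def)
qed

lemma coeff_pairing_X_power_mult: "coeff_pairing h (poly_X ^ k * p) = coeff_pairing (\<lambda>s. h (s + k)) p"
  by (induction k arbitrary: h) (simp_all add: mult.assoc coeff_pairing_X_mult)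

lemma coeff_pairing_sum_left:
  "finite B \<Longrightarrow> coeff_pairing (\<lambda>s. \<Sum>b\<in>B. h b s) p = (\<Sum>b\<in>B. coeff_pairing (h b) p)"
  by (simp add: coeff_pairing_def sum_distrib_right sum.swap[of _ B])

text \<open>The coefficient of \<open>X\<^sup>t\<close> in \<open>chain_poly s d\<close> counts the chains along \<open>d\<close> through
  the pairs of an alternating alphabet that start on a letter of sign \<open>s\<close> and move to a later
  pair exactly \<open>t\<close> times; choosing the \<open>t\<close> later pairs then contributes a binomial coefficient.\<close>

fun chain_poly :: "bool \<Rightarrow> bool list \<Rightarrow> nat poly" where
  "chain_poly s [] = 1"
| "chain_poly s (g # d) = poly_X * (chain_poly False d + chain_poly True d)
     + (if pair_step s False g then chain_poly False d else 0)
     + (if pair_step s True g then chain_poly True d else 0)"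

lemma chain_count_alt_alph:
  "l < 2 * m \<Longrightarrow>
    chain_count (alt_alph True m) d l = coeff_pairing (\<lambda>s. (m - 1 - l div 2) choose s) (chain_poly (odd l) d)"
proof (induction d arbitrary: l)
  case (Cons g d)
  let ?P = "\<lambda>b s. coeff_pairing (\<lambda>t. (m - 1 - b) choose t) (chain_poly s d)"
  have pair: "chain_count (alt_alph True m) d (2 * b) = ?P b False"
    "chain_count (alt_alph True m) d (Suc (2 * b)) = ?P b True" if "b < m" for b
    using Cons.IH[of "2 * b"] Cons.IH[of "2 * b + 1"] that by simp_all
  have "(\<Sum>b\<in>{Suc (l div 2)..<m}.
        chain_count (alt_alph True m) d (2 * b) + chain_count (alt_alph True m) d (2 * b + 1))
      = (\<Sum>b\<in>{Suc (l div 2)..<m}. ?P b False + ?P b True)"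
    by (intro sum.cong) (simp_all add: pair)
  also have "\<dots> = coeff_pairing (\<lambda>t. (m - 1 - l div 2) choose Suc t) (chain_poly False d + chain_poly True d)"
    using Cons.prems
    by (simp add: sum.distrib coeff_pairing_sum_left[symmetric] sum_choose_diff coeff_pairing_add)
  finally show ?case
    unfolding chain_count_alt_alph_Cons[OF Cons.prems]
    using Cons.prems by (simp add: pair coeff_pairing_add coeff_pairing_X_mult)
qed simp

definition chain_poly_total :: "bool list \<Rightarrow> nat poly" where
  "chain_poly_total d = chain_poly False d + chain_poly True d"

lemma sum_chain_count_alt_alph:
  "(\<Sum>l<2 * m. chain_count (alt_alph True m) d l) = coeff_pairing (\<lambda>t. m choose Suc t) (chain_poly_total d)"
proof -
  have "(\<Sum>l<2 * m. chain_count (alt_alph True m) d l)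
      = (\<Sum>b\<in>{0..<m}. coeff_pairing (\<lambda>t. (m - 1 - b) choose t) (chain_poly False d)
                     + coeff_pairing (\<lambda>t. (m - 1 - b) choose t) (chain_poly True d))"
    by (simp add: sum_lessThan_double chain_count_alt_alph atLeast0LessThan)
  also have "\<dots> = coeff_pairing (\<lambda>t. m choose Suc t) (chain_poly_total d)"
    by (simp add: sum.distrib coeff_pairing_sum_left[symmetric] sum_choose_diff[of 0 m]
        chain_poly_total_def coeff_pairing_add)
  finally show ?thesis .
qed

text \<open>The factors \<open>1 + 2 X\<close> and \<open>4 (1 + X)\<close> are written without numerals, which the
  simplifier does not normalize in \<open>nat poly\<close>.\<close>

definition step_poly :: "nat poly" where
  "step_poly = 1 + poly_X + poly_X"

definition peak_poly :: "nat poly" where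
  "peak_poly = (1 + poly_X) + (1 + poly_X) + (1 + poly_X) + (1 + poly_X)"

lemma chain_poly_total_Nil: "chain_poly_total [] = 1 + 1"
  by (simp add: chain_poly_total_def)

lemma chain_poly_total_single: "chain_poly_total [g] = (1 + 1) * step_poly"
  by (cases g) (simp_all add: chain_poly_total_def step_poly_def pair_step_def algebra_simps,
    simp_all add: add.assoc[symmetric])

lemma chain_poly_total_True_Cons: "chain_poly_total (True # d) = step_poly * chain_poly_total d"
  by (simp add: chain_poly_total_def step_poly_def pair_step_def algebra_simps)

lemma chain_poly_total_Cons_False_Cons:
  "chain_poly_total (g # False # d) = step_poly * chain_poly_total (False # d)"
  by (cases g) (simp_all add: chain_poly_total_def step_poly_def pair_step_def algebra_simps)

lemma chain_poly_total_False_True_Cons: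
  "chain_poly_total (False # True # d) = poly_X * peak_poly * chain_poly_total d"
  by (simp add: chain_poly_total_def peak_poly_def pair_step_def algebra_simps)

lemma chain_poly_total_closed:
  "chain_poly_total d = poly_X ^ peak_count d * ((1 + 1) * peak_poly ^ peak_count d
     * step_poly ^ (length d - 2 * peak_count d))"
proof -
  have "chain_poly_total d = poly_X ^ peak_count d * ((1 + 1) * peak_poly ^ peak_count d
     * step_poly ^ (length d - 2 * peak_count d)) \<and> 2 * peak_count d \<le> length d"
    by (induction d rule: peak_count.induct)
      (auto simp: chain_poly_total_Nil chain_poly_total_single chain_poly_total_True_Cons
        chain_poly_total_Cons_False_Cons chain_poly_total_False_True_Cons algebra_simps Suc_diff_le)
  then show ?thesis ..
qed

definition peak_coeff :: "nat \<Rightarrow> nat \<Rightarrow> nat \<Rightarrow> nat" where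
  "peak_coeff r k p = coeff_pairing (\<lambda>t. k choose Suc t)
     (poly_X ^ p * ((1 + 1) * peak_poly ^ p * step_poly ^ (r - 2 * p)))"

lemma peak_coeff_eq_0: "k \<le> p \<Longrightarrow> peak_coeff r k p = 0"
  unfolding peak_coeff_def coeff_pairing_X_power_mult by (simp add: coeff_pairing_def)

lemma peak_coeff_pos: "0 < peak_coeff r (Suc p) p"
proof -
  let ?R = "(1 + 1) * peak_poly ^ p * step_poly ^ (r - 2 * p)"
  have "peak_coeff r (Suc p) p = (\<Sum>s\<le>degree ?R. (Suc p choose Suc (s + p)) * coeff ?R s)"
    unfolding peak_coeff_def coeff_pairing_X_power_mult by (simp only: coeff_pairing_def)
  also have "\<dots> \<ge> (Suc p choose Suc (0 + p)) * coeff ?R 0"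
    by (rule member_le_sum) auto
  moreover have "0 < coeff ?R 0"
    by (simp add: poly_0_coeff_0[symmetric] peak_poly_def step_poly_def poly_X_def)
  ultimately show ?thesis
    by simp
qed

lemma sum_chain_count_alt_alph_eq_peak_coeff:
  "(\<Sum>l<2 * m. chain_count (alt_alph True m) d l) = peak_coeff (length d) m (peak_count d)"
  by (simp add: sum_chain_count_alt_alph chain_poly_total_closed peak_coeff_def)

lemma std_sum_alt_alph_True:
  assumes "1 \<le> n"
  shows "std_sum n (alt_alph True k) = perm_sum n (\<lambda>\<pi>. peak_coeff (n - 1) k (interior_peaks n \<pi>))"
proof
  fix \<pi>
  show "std_sum n (alt_alph True k) \<pi> = perm_sum n (\<lambda>\<pi>. peak_coeff (n - 1) k (interior_peaks n \<pi>)) \<pi>"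
    using assms std_sum_apply[of \<pi> n "alt_alph True k"] sum_chain_count_alt_alph_eq_peak_coeff[of k]
    by (auto simp: interior_peaks_eq_peak_count std_sum_def perm_sum_def)
qed

lemma std_sum_alt_alph_False:
  assumes "1 \<le> n"
  shows "std_sum n (alt_alph False k) = perm_sum n (\<lambda>\<pi>. peak_coeff (n - 1) k (exterior_peaks n \<pi> - 1))"
proof
  fix \<pi>
  have "chain_count (alt_alph False k) d l = chain_count (alt_alph True k) (map Not d) l" for d l
    using chain_count_map_Not[of "alt_alph True k" "map Not d" l] by (simp add: alt_alph_False comp_def)
  then show "std_sum n (alt_alph False k) \<pi>
      = perm_sum n (\<lambda>\<pi>. peak_coeff (n - 1) k (exterior_peaks n \<pi> - 1)) \<pi>"
    using assms std_sum_apply[of \<pi> n "alt_alph False k"] sum_chain_count_alt_alph_eq_peak_coeff[of k]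
    by (auto simp: exterior_peaks_eq_peak_count std_sum_def perm_sum_def)
qed

lemma std_sum_alt_alph_mult:
  assumes "1 \<le> k" "1 \<le> l"
  shows "gmult n (std_sum n (alt_alph b k)) (std_sum n (alt_alph b l)) = std_sum n (alt_alph b (2 * k * l))"
  using assms by (simp add: std_sum_mult alph_prod_alt_alph mult_ac)


section \<open>The peak algebras\<close>

lemma Suc_le_half_iff: "Suc p \<le> (n + 1) div 2 \<longleftrightarrow> 2 * p + 1 \<le> n" for p n :: nat
  by presburger

lemma comm_subalg_interior_level_sums:
  assumes "1 \<le> n"
  defines "m \<equiv> (n + 1) div 2"
  shows "comm_subalg n (qspan (level_sum n (\<lambda>\<pi>. interior_peaks n \<pi> + 1) ` {1..m}))
    \<and> qdim (qspan (level_sum n (\<lambda>\<pi>. interior_peaks n \<pi> + 1) ` {1..m})) = m"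
proof (rule comm_subalg_span_level_sums[where \<mu> = "\<lambda>k l. 2 * k * l" and G = "peak_coeff (n - 1)"
      and \<Phi> = "\<lambda>k. std_sum n (alt_alph True k)"])
  show "interior_peaks n \<pi> + 1 \<in> {1..m}" if "\<pi> \<in> perms n" for \<pi>
    using interior_peaks_le[OF that] assms(1) by (simp add: m_def Suc_le_half_iff)
  show "\<exists>\<pi>\<in>perms n. interior_peaks n \<pi> + 1 = i" if "i \<in> {1..m}" for i
  proof -
    have "2 * (i - 1) + 1 \<le> n"
      using that Suc_le_half_iff[of "i - 1" n] unfolding m_def by simp
    then show ?thesis
      using that peak_witness_perms interior_peaks_peak_witness
      by (intro bexI[of _ "peak_witness (i - 1)"]) auto
  qed
  show "std_sum n (alt_alph True k)
      = perm_sum n (\<lambda>\<pi>. peak_coeff (n - 1) k (interior_peaks n \<pi> + 1 - 1))" for k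
    using std_sum_alt_alph_True[OF assms(1)] by simp
qed (simp_all add: peak_coeff_eq_0 peak_coeff_pos std_sum_alt_alph_mult mult.commute)

lemma comm_subalg_exterior_level_sums:
  assumes "1 \<le> n"
  defines "m \<equiv> (n + 1) div 2"
  shows "comm_subalg n (qspan (level_sum n (exterior_peaks n) ` {1..m}))
    \<and> qdim (qspan (level_sum n (exterior_peaks n) ` {1..m})) = m"
proof (rule comm_subalg_span_level_sums[where \<mu> = "\<lambda>k l. 2 * k * l" and G = "peak_coeff (n - 1)"
      and \<Phi> = "\<lambda>k. std_sum n (alt_alph False k)"])
  show "exterior_peaks n \<pi> \<in> {1..m}" if "\<pi> \<in> perms n" for \<pi>
    using exterior_peaks_le[OF that assms(1)] exterior_peaks_eq_peak_count[OF that assms(1)]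
    by (simp add: m_def Suc_le_half_iff)
  show "\<exists>\<pi>\<in>perms n. exterior_peaks n \<pi> = i" if "i \<in> {1..m}" for i
  proof -
    have "2 * (i - 1) + 1 \<le> n"
      using that Suc_le_half_iff[of "i - 1" n] unfolding m_def by simp
    then show ?thesis
      using that perm_complement_perms[OF peak_witness_perms] interior_peaks_peak_witness
        exterior_peaks_perm_complement[OF peak_witness_perms assms(1)]
      by (intro bexI[of _ "perm_complement n (peak_witness (i - 1))"]) auto
  qed
  show "std_sum n (alt_alph False k)
      = perm_sum n (\<lambda>\<pi>. peak_coeff (n - 1) k (exterior_peaks n \<pi> - 1))" for k
    using std_sum_alt_alph_False[OF assms(1)] .
qed (simp_all add: peak_coeff_eq_0 peak_coeff_pos std_sum_alt_alph_mult mult.commute)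

theorem corollary3p2:
  fixes n :: nat
  assumes "n \<ge> 1"
  shows "comm_subalg n (peak_alg n) \<and> qdim (peak_alg n) = (n + 1) div 2 \<and>
         comm_subalg n (peak_alg_ext n) \<and> qdim (peak_alg_ext n) = (n + 1) div 2"
proof -
  have "E' n ` {1..(n + 1) div 2} = level_sum n (\<lambda>\<pi>. interior_peaks n \<pi> + 1) ` {1..(n + 1) div 2}"
    by (intro image_cong) (auto simp: E'_def level_sum_def fun_eq_iff)
  moreover have "Ebar' n = level_sum n (exterior_peaks n)"
    by (auto simp: Ebar'_def level_sum_def fun_eq_iff)
  ultimately show ?thesis
    using comm_subalg_interior_level_sums[OF assms] comm_subalg_exterior_level_sums[OF assms]
    by (simp add: peak_alg_def peak_alg_ext_def)
qed

end
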